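(* Let $n \ge 1$, let $C \in \mathbb{R}^{n\times n}$ be a real cost matrix, let $\eta > 0$, and set $K = \exp[-\eta C]$, i.e. $K_{ij} = e^{-\eta C_{ij}}$. Then: (i) the entropic Minimum Mean Cycle problem $$\min_{P \in \Delta_{n\times n} \,:\, P\mathbf{1} = P^T\mathbf{1}} \ \langle P, C\rangle + \frac{1}{\eta}\sum_{i,j} P_{ij}\log P_{ij}$$ has a unique minimizer $P^\star$; (ii) there exists a positive diagonal matrix $X$ such that $B = XKX^{-1}$ satisfies $B\mathbf{1} = B^T\mathbf{1}$, and for any such $X$ we have $P^\star = B / (\mathbf{1}^T B \mathbf{1})$.
   Context: $\Delta_{n\times n} = \{P \in \mathbb{R}^{n\times n}_{\ge 0} : \sum_{ij} P_{ij} = 1\}$; $\mathbf{1}$ is the all-ones vector; $\langle P, C\rangle = \sum_{ij} P_{ij}C_{ij}$; $0\log 0 = 0$. The Matrix Balancing problem for a positive matrix $K$ asks for a positive diagonal $X$ such that $P = XKX^{-1}$ has equal row and column sums, $P\mathbf{1} = P^T\mathbf{1}$. *)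

theory Defs
  imports "HOL-Analysis.Analysis"
begin

text \<open>Matrices are indexed by a finite type 'n (n = CARD('n) >= 1 automatically).\<close>

definition xlogx :: "real \<Rightarrow> real" where
  "xlogx t = (if t = 0 then 0 else t * ln t)"

definition row_sum :: "real^'n^'n \<Rightarrow> 'n \<Rightarrow> real" where
  "row_sum P i = (\<Sum>j\<in>UNIV. P $ i $ j)"

definition col_sum :: "real^'n^'n \<Rightarrow> 'n \<Rightarrow> real" where
  "col_sum P j = (\<Sum>i\<in>UNIV. P $ i $ j)"

definition total_sum :: "real^'n^'n \<Rightarrow> real" where
  "total_sum P = (\<Sum>i\<in>UNIV. \<Sum>j\<in>UNIV. P $ i $ j)"

definition simplex_mat :: "(real^'n^'n) set" where
  "simplex_mat = {P. (\<forall>i j. P $ i $ j \<ge> 0) \<and> total_sum P = 1}"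

definition balanced :: "real^'n^'n \<Rightarrow> bool" where
  "balanced P \<longleftrightarrow> (\<forall>i. row_sum P i = col_sum P i)"

definition frob_inner :: "real^'n^'n \<Rightarrow> real^'n^'n \<Rightarrow> real" where
  "frob_inner P C = (\<Sum>i\<in>UNIV. \<Sum>j\<in>UNIV. P $ i $ j * C $ i $ j)"

definition entropic_mmc_obj :: "real \<Rightarrow> real^'n^'n \<Rightarrow> real^'n^'n \<Rightarrow> real" where
  "entropic_mmc_obj \<eta> C P =
     frob_inner P C + (1 / \<eta>) * (\<Sum>i\<in>UNIV. \<Sum>j\<in>UNIV. xlogx (P $ i $ j))"

definition is_entropic_mmc_minimizer :: "real \<Rightarrow> real^'n^'n \<Rightarrow> real^'n^'n \<Rightarrow> bool" where
  "is_entropic_mmc_minimizer \<eta> C P \<longleftrightarrow>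
     P \<in> simplex_mat \<and> balanced P \<and>
     (\<forall>Q. Q \<in> simplex_mat \<and> balanced Q \<longrightarrow> entropic_mmc_obj \<eta> C P \<le> entropic_mmc_obj \<eta> C Q)"

definition gibbs_kernel :: "real \<Rightarrow> real^'n^'n \<Rightarrow> real^'n^'n" where
  "gibbs_kernel \<eta> C = (\<chi> i j. exp (- \<eta> * C $ i $ j))"

definition diag_mat :: "real^'n \<Rightarrow> real^'n^'n" where
  "diag_mat x = (\<chi> i j. if i = j then x $ i else 0)"

end

theory Submission
  imports Defs
begin

text \<open>
  For a positive diagonal scaling \<open>x\<close>, the matrix \<open>P = B / 1\<^sup>T B 1\<close> with
  \<open>B = X K X\<^sup>-\<^sup>1\<close> satisfies \<open>\<eta> C\<^sub>i\<^sub>j = w\<^sub>i - w\<^sub>j - c - ln P\<^sub>i\<^sub>j\<close> with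
  \<open>w = ln x\<close>. On balanced \<open>Q\<close> of total mass one the potential terms cancel, so
  \<open>\<eta>\<close> times the objective equals \<open>KL(Q\<parallel>P) - c\<close>; nonnegativity of the
  Kullback--Leibler divergence and its equality case make \<open>P\<close> the unique minimizer,
  whatever balancing \<open>x\<close> was used. A balancing exists because
  \<open>u \<mapsto> \<Sum> K\<^sub>i\<^sub>j exp (u\<^sub>i - u\<^sub>j)\<close> attains its minimum (its sublevel sets are
  bounded up to constant shifts of \<open>u\<close>), and its partial derivative in \<open>u\<^sub>k\<close> is
  row sum minus column sum \<open>k\<close>.
\<close>

lemma diag_mat_mult_entry: "(diag_mat x ** A) $ i $ j = x $ i * A $ i $ j"
  by (simp add: matrix_matrix_mult_def diag_mat_def if_distrib[of "\<lambda>a. a * _"] cong: if_cong)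

lemma mult_diag_mat_entry: "(A ** diag_mat x) $ i $ j = A $ i $ j * x $ j"
  by (simp add: matrix_matrix_mult_def diag_mat_def if_distrib[of "\<lambda>a. _ * a"] cong: if_cong)

lemma matrix_inv_diag_mat:
  fixes x :: "real^'n"
  assumes "\<forall>i. x $ i \<noteq> 0"
  shows "matrix_inv (diag_mat x) = diag_mat (\<chi> i. 1 / x $ i)"
proof -
  let ?A = "diag_mat x" and ?B = "diag_mat (\<chi> i. 1 / x $ i) :: real^'n^'n"
  have AB: "?A ** ?B = mat 1" and BA: "?B ** ?A = mat 1"
    using assms by (simp_all only: vec_eq_iff diag_mat_mult_entry) (auto simp: diag_mat_def mat_def)
  have inv: "matrix_inv ?A ** ?A = mat 1"
    unfolding matrix_inv_def by (rule someI2[where a="?B"]) (use AB BA in auto)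
  have "matrix_inv ?A = matrix_inv ?A ** (?A ** ?B)" using AB by simp
  also have "\<dots> = ?B" by (simp add: matrix_mul_assoc inv)
  finally show ?thesis .
qed

lemma diag_similarity_entry:
  fixes x :: "real^'n"
  assumes "\<forall>i. x $ i \<noteq> 0"
  shows "(diag_mat x ** K ** matrix_inv (diag_mat x)) $ i $ j = x $ i * K $ i $ j / x $ j"
  by (simp add: matrix_inv_diag_mat[OF assms] mult_diag_mat_entry diag_mat_mult_entry)

lemma xlogx_bregman_nonneg_eq:
  fixes q p :: real
  assumes "q \<ge> 0" "p > 0"
  shows "xlogx q - q * ln p - q + p \<ge> 0"
    and "xlogx q - q * ln p - q + p = 0 \<Longrightarrow> q = p"
proof -
  have "xlogx q - q * ln p - q + p \<ge> 0 \<and> (xlogx q - q * ln p - q + p = 0 \<longrightarrow> q = p)"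
  proof (cases "q = 0")
    case True
    then show ?thesis using assms by (simp add: xlogx_def)
  next
    case False
    then have q: "q > 0" using assms by simp
    have "xlogx q - q * ln p - q + p = q * (p / q - 1 - ln (p / q))"
      using q assms by (simp add: xlogx_def ln_div field_simps)
    moreover have "ln (p / q) \<le> p / q - 1"
      using q assms by (intro ln_le_minus_one) simp
    moreover have "ln (p / q) = p / q - 1 \<Longrightarrow> p / q = 1"
      using q assms by (intro ln_eq_minus_one) auto
    ultimately show ?thesis using q by auto
  qed
  then show "xlogx q - q * ln p - q + p \<ge> 0"
    and "xlogx q - q * ln p - q + p = 0 \<Longrightarrow> q = p" by auto
qed

definition kl_div :: "real^'n^'n \<Rightarrow> real^'n^'n \<Rightarrow> real" where
  "kl_div Q P =
     (\<Sum>i\<in>UNIV. \<Sum>j\<in>UNIV. xlogx (Q $ i $ j) - Q $ i $ j * ln (P $ i $ j) - Q $ i $ j + P $ i $ j)"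

lemma kl_div_self:
  assumes "\<forall>i j. P $ i $ j > 0"
  shows "kl_div P P = 0"
proof -
  have "xlogx (P $ i $ j) = P $ i $ j * ln (P $ i $ j)" for i j
    using assms by (simp add: xlogx_def)
  then show ?thesis by (simp add: kl_div_def)
qed

lemma kl_div_nonneg:
  assumes "\<forall>i j. Q $ i $ j \<ge> 0" "\<forall>i j. P $ i $ j > 0"
  shows "kl_div Q P \<ge> 0"
  unfolding kl_div_def using assms by (intro sum_nonneg xlogx_bregman_nonneg_eq(1)) auto

lemma kl_div_eq_0_imp_eq:
  assumes "\<forall>i j. Q $ i $ j \<ge> 0" "\<forall>i j. P $ i $ j > 0" "kl_div Q P = 0"
  shows "Q = P"
proof -
  define d where "d i j = xlogx (Q $ i $ j) - Q $ i $ j * ln (P $ i $ j) - Q $ i $ j + P $ i $ j"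
    for i j
  have d_nonneg: "d i j \<ge> 0" for i j
    unfolding d_def using assms by (intro xlogx_bregman_nonneg_eq(1)) auto
  have "(\<Sum>i\<in>UNIV. \<Sum>j\<in>UNIV. d i j) = 0"
    using assms(3) by (simp add: kl_div_def d_def)
  then have "(\<Sum>j\<in>UNIV. d i j) = 0" for i
    using d_nonneg by (subst (asm) sum_nonneg_eq_0_iff) (auto intro: sum_nonneg)
  then have "d i j = 0" for i j
    using d_nonneg by (subst (asm) sum_nonneg_eq_0_iff) auto
  then show ?thesis
    unfolding d_def using assms by (auto simp: vec_eq_iff intro: xlogx_bregman_nonneg_eq(2))
qed

lemma balanced_potential_sum:
  assumes "balanced Q"
  shows "(\<Sum>i\<in>UNIV. \<Sum>j\<in>UNIV. Q $ i $ j * (w i - w j)) = 0"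
proof -
  have "(\<Sum>i\<in>UNIV. \<Sum>j\<in>UNIV. Q $ i $ j * w i) = (\<Sum>i\<in>UNIV. w i * row_sum Q i)"
    by (simp add: row_sum_def sum_distrib_left mult.commute)
  moreover have "(\<Sum>i\<in>UNIV. \<Sum>j\<in>UNIV. Q $ i $ j * w j) = (\<Sum>j\<in>UNIV. w j * col_sum Q j)"
    by (subst sum.swap) (simp add: col_sum_def sum_distrib_left mult.commute)
  ultimately show ?thesis
    using assms by (simp add: balanced_def right_diff_distrib sum_subtractf)
qed

lemma entropic_mmc_obj_gibbs_form:
  fixes C P Q :: "real^'n^'n" and w :: "'n \<Rightarrow> real"
  assumes "\<eta> > 0"
    and gibbs: "\<forall>i j. \<eta> * C $ i $ j = w i - w j - c - ln (P $ i $ j)"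
    and "balanced Q" "total_sum Q = 1" "total_sum P = 1"
  shows "\<eta> * entropic_mmc_obj \<eta> C Q = kl_div Q P - c"
proof -
  have "\<eta> * frob_inner Q C = (\<Sum>i\<in>UNIV. \<Sum>j\<in>UNIV.
          Q $ i $ j * (w i - w j) - Q $ i $ j * c - Q $ i $ j * ln (P $ i $ j))"
    unfolding frob_inner_def sum_distrib_left
    by (intro sum.cong refl) (simp add: gibbs algebra_simps flip: mult.assoc)
  also have "\<dots> = - c - (\<Sum>i\<in>UNIV. \<Sum>j\<in>UNIV. Q $ i $ j * ln (P $ i $ j))"
    using assms(3,4) balanced_potential_sum[OF assms(3)]
    by (simp add: sum_subtractf total_sum_def flip: sum_distrib_right)
  finally have "\<eta> * frob_inner Q C = \<dots>" .
  moreover have "kl_div Q P = (\<Sum>i\<in>UNIV. \<Sum>j\<in>UNIV. xlogx (Q $ i $ j) - Q $ i $ j * ln (P $ i $ j))"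
    using assms(4,5) by (simp add: kl_div_def sum.distrib sum_subtractf total_sum_def)
  ultimately show ?thesis
    using \<open>\<eta> > 0\<close> by (simp add: entropic_mmc_obj_def distrib_left sum_subtractf)
qed

lemma gibbs_form_unique_entropic_mmc_minimizer:
  fixes C P Q :: "real^'n^'n" and w :: "'n \<Rightarrow> real"
  assumes "\<eta> > 0" "total_sum P = 1" "balanced P" "\<forall>i j. P $ i $ j > 0"
    and gibbs: "\<forall>i j. \<eta> * C $ i $ j = w i - w j - c - ln (P $ i $ j)"
  shows "is_entropic_mmc_minimizer \<eta> C Q \<longleftrightarrow> Q = P"
proof -
  have P_feasible: "P \<in> simplex_mat \<and> balanced P"
    using assms by (auto simp: simplex_mat_def less_imp_le)
  have excess: "\<eta> * (entropic_mmc_obj \<eta> C Q - entropic_mmc_obj \<eta> C P) = kl_div Q P"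
    if "Q \<in> simplex_mat \<and> balanced Q" for Q :: "real^'n^'n"
    using that assms entropic_mmc_obj_gibbs_form[OF assms(1) gibbs, of Q]
      entropic_mmc_obj_gibbs_form[OF assms(1) gibbs, of P] kl_div_self[of P]
    by (simp add: simplex_mat_def right_diff_distrib)
  have P_min: "is_entropic_mmc_minimizer \<eta> C P"
    unfolding is_entropic_mmc_minimizer_def
  proof (intro conjI P_feasible[THEN conjunct1] P_feasible[THEN conjunct2] allI impI)
    fix Q :: "real^'n^'n" assume Q: "Q \<in> simplex_mat \<and> balanced Q"
    then have "\<eta> * (entropic_mmc_obj \<eta> C Q - entropic_mmc_obj \<eta> C P) \<ge> 0"
      unfolding excess[OF Q] using assms(4) by (intro kl_div_nonneg) (auto simp: simplex_mat_def)
    then show "entropic_mmc_obj \<eta> C P \<le> entropic_mmc_obj \<eta> C Q"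
      using \<open>\<eta> > 0\<close> by (auto simp: zero_le_mult_iff)
  qed
  have "Q = P" if Q_min: "is_entropic_mmc_minimizer \<eta> C Q" for Q :: "real^'n^'n"
  proof -
    have Q: "Q \<in> simplex_mat \<and> balanced Q"
      and "entropic_mmc_obj \<eta> C Q \<le> entropic_mmc_obj \<eta> C P"
      using Q_min P_feasible unfolding is_entropic_mmc_minimizer_def by blast+
    then have "kl_div Q P \<le> 0"
      unfolding excess[OF Q, symmetric] using \<open>\<eta> > 0\<close> by (simp add: mult_le_0_iff)
    moreover have Q_nonneg: "\<forall>i j. Q $ i $ j \<ge> 0" using Q by (simp add: simplex_mat_def)
    ultimately have "kl_div Q P = 0"
      using kl_div_nonneg[OF Q_nonneg assms(4)] by linarith
    then show ?thesis using Q_nonneg assms(4) by (intro kl_div_eq_0_imp_eq)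
  qed
  then show ?thesis using P_min by blast
qed

definition scaled_kernel :: "real^'n^'n \<Rightarrow> real^'n \<Rightarrow> real^'n^'n" where
  "scaled_kernel K u = (\<chi> i j. K $ i $ j * exp (u $ i - u $ j))"

lemma entry_le_total_sum:
  assumes "\<forall>i j. P $ i $ j \<ge> 0"
  shows "P $ i $ j \<le> total_sum P"
proof -
  have "P $ i $ j \<le> (\<Sum>b\<in>UNIV. P $ i $ b)" using assms by (intro member_le_sum) auto
  also have "\<dots> \<le> total_sum P" unfolding total_sum_def
    using assms by (intro member_le_sum) (auto intro: sum_nonneg)
  finally show ?thesis .
qed

lemma total_sum_scaled_kernel_attains_min:
  fixes K :: "real^'n^'n"
  assumes K_pos: "\<forall>i j. K $ i $ j > 0"
  shows "\<exists>u. \<forall>v. total_sum (scaled_kernel K u) \<le> total_sum (scaled_kernel K v)"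
proof -
  define F where "F v = total_sum (scaled_kernel K v)" for v
  define R where "R = (\<Sum>i\<in>UNIV. \<Sum>j\<in>UNIV. \<bar>ln (F 0 / K $ i $ j)\<bar>)"
  have sublevel_bound: "v $ i - v $ j \<le> R" if "F v \<le> F 0" for v i j
  proof -
    have "K $ i $ j * exp (v $ i - v $ j) \<le> F v"
      unfolding F_def using entry_le_total_sum[of "scaled_kernel K v" i j] K_pos
      by (simp add: scaled_kernel_def less_imp_le)
    then have "exp (v $ i - v $ j) \<le> F 0 / K $ i $ j"
      using that K_pos by (simp add: field_simps mult.commute)
    then have "v $ i - v $ j \<le> ln (F 0 / K $ i $ j)"
      by (metis exp_gt_zero ln_exp ln_le_cancel_iff order_less_le_trans)
    also have "\<dots> \<le> R"
      unfolding R_def using entry_le_total_sum[of "\<chi> i j. \<bar>ln (F 0 / K $ i $ j)\<bar>" i j]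
      by (simp add: total_sum_def)
    finally show ?thesis .
  qed
  define T where "T = cbox (- (\<chi> i. R)) (\<chi> i. R :: real^'n)"
  have "0 \<in> T" unfolding T_def mem_box_cart using sublevel_bound[of 0] by force
  moreover have "continuous_on T F"
    unfolding F_def total_sum_def scaled_kernel_def by (intro continuous_intros)
  ultimately obtain u where "u \<in> T" and u_min: "\<forall>v\<in>T. F u \<le> F v"
    using continuous_attains_inf[of T F] unfolding T_def by auto
  have "F u \<le> F v" for v
  proof (cases "F v \<le> F 0")
    case False
    then show ?thesis using u_min \<open>0 \<in> T\<close> by force
  next
    case True
    \<comment> \<open>F is invariant under constant shifts of the potentials, so v may be moved into T.\<close>
    define v' where "v' = (\<chi> i. v $ i - v $ (undefined :: 'n))"
    have "F v' = F v" unfolding F_def v'_def scaled_kernel_def by simp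
    moreover have "v' \<in> T"
      unfolding T_def mem_box_cart v'_def
      using sublevel_bound[OF True, of undefined] sublevel_bound[OF True, of _ undefined]
      by (simp add: abs_le_iff) (smt (verit))
    ultimately show ?thesis using u_min by metis
  qed
  then show ?thesis unfolding F_def by blast
qed

lemma total_sum_scaled_kernel_min_balanced:
  fixes K :: "real^'n^'n" and u :: "real^'n"
  assumes u_min: "\<forall>v. total_sum (scaled_kernel K u) \<le> total_sum (scaled_kernel K v)"
  shows "balanced (scaled_kernel K u)"
  unfolding balanced_def
proof
  fix k :: 'n
  define B where "B = scaled_kernel K u"
  define d where "d i = (if i = k then 1 else 0 :: real)" for i
  define g where "g t = (\<Sum>i\<in>UNIV. \<Sum>j\<in>UNIV. B $ i $ j * exp (t * (d i - d j)))" for t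
  have g_eq: "g t = total_sum (scaled_kernel K (u + t *\<^sub>R (\<chi> i. d i)))" for t
    unfolding g_def B_def total_sum_def scaled_kernel_def
    by (intro sum.cong refl) (simp add: algebra_simps flip: exp_add)
  have "(g has_real_derivative (\<Sum>i\<in>UNIV. \<Sum>j\<in>UNIV. B $ i $ j * (d i - d j))) (at 0)"
    unfolding g_def by (auto intro!: derivative_eq_intros sum.cong)
  moreover have "g 0 \<le> g t" for t
    using u_min by (simp add: g_eq)
  ultimately have "(\<Sum>i\<in>UNIV. \<Sum>j\<in>UNIV. B $ i $ j * (d i - d j)) = 0"
    by (intro DERIV_local_min[of g _ 0 1]) auto
  moreover have "(\<Sum>i\<in>UNIV. \<Sum>j\<in>UNIV. B $ i $ j * (d i - d j)) = row_sum B k - col_sum B k"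
    by (simp add: d_def row_sum_def col_sum_def right_diff_distrib sum_subtractf
        if_distrib[of "\<lambda>a. _ * a"] sum.swap[of _ UNIV UNIV] cong: if_cong)
  ultimately show "row_sum B k = col_sum B k" by simp
qed

lemma diag_similarity_scaled_kernel:
  fixes K :: "real^'n^'n" and u :: "real^'n"
  shows "diag_mat (\<chi> i. exp (u $ i)) ** K ** matrix_inv (diag_mat (\<chi> i. exp (u $ i)))
       = scaled_kernel K u"
  by (simp add: vec_eq_iff diag_similarity_entry scaled_kernel_def exp_diff)

lemma normalized_balancing_unique_entropic_mmc_minimizer:
  fixes C Q :: "real^'n^'n" and x :: "real^'n" and \<eta> :: real
  defines "B \<equiv> diag_mat x ** gibbs_kernel \<eta> C ** matrix_inv (diag_mat x)"
  assumes "\<eta> > 0" and x_pos: "\<forall>i. x $ i > 0" and "balanced B"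
  shows "is_entropic_mmc_minimizer \<eta> C Q \<longleftrightarrow> Q = (1 / total_sum B) *\<^sub>R B"
proof -
  define P where "P = (1 / total_sum B) *\<^sub>R B"
  have B_entry: "B $ i $ j = x $ i * exp (- (\<eta> * C $ i $ j)) / x $ j" for i j
    using x_pos unfolding B_def
    by (subst diag_similarity_entry) (metis less_irrefl, simp add: gibbs_kernel_def)
  then have B_pos: "B $ i $ j > 0" for i j using x_pos by simp
  then have "total_sum B > 0" unfolding total_sum_def by (intro sum_pos) auto
  then have P_pos: "P $ i $ j > 0" for i j using B_pos by (simp add: P_def)
  have "total_sum P = 1"
    using \<open>total_sum B > 0\<close> by (simp add: P_def total_sum_def flip: sum_divide_distrib)
  moreover have "balanced P"
    using \<open>balanced B\<close> by (simp add: P_def balanced_def row_sum_def col_sum_def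
        flip: sum_divide_distrib)
  moreover have "\<eta> * C $ i $ j = ln (x $ i) - ln (x $ j) - ln (total_sum B) - ln (P $ i $ j)"
    for i j
    using x_pos[rule_format, of i] x_pos[rule_format, of j] \<open>total_sum B > 0\<close>
    by (simp add: P_def B_entry ln_div ln_mult)
  ultimately show ?thesis
    unfolding P_def[symmetric] using \<open>\<eta> > 0\<close> P_pos
    by (intro gibbs_form_unique_entropic_mmc_minimizer) auto
qed

theorem lemma2:
  fixes C :: "real^'n^'n" and \<eta> :: real
  assumes "\<eta> > 0"
  shows "\<exists>Pstar. is_entropic_mmc_minimizer \<eta> C Pstar
           \<and> (\<forall>Q. is_entropic_mmc_minimizer \<eta> C Q \<longrightarrow> Q = Pstar)
           \<and> (\<exists>x :: real^'n. (\<forall>i. x $ i > 0) \<and>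
                balanced (diag_mat x ** gibbs_kernel \<eta> C ** matrix_inv (diag_mat x)))
           \<and> (\<forall>x :: real^'n. (\<forall>i. x $ i > 0) \<and>
                balanced (diag_mat x ** gibbs_kernel \<eta> C ** matrix_inv (diag_mat x)) \<longrightarrow>
                Pstar = (1 / total_sum (diag_mat x ** gibbs_kernel \<eta> C ** matrix_inv (diag_mat x)))
                          *\<^sub>R (diag_mat x ** gibbs_kernel \<eta> C ** matrix_inv (diag_mat x)))"
proof -
  let ?K = "gibbs_kernel \<eta> C"
  let ?B = "\<lambda>x. diag_mat x ** ?K ** matrix_inv (diag_mat x)"
  let ?P = "\<lambda>x. (1 / total_sum (?B x)) *\<^sub>R ?B x"
  have "\<forall>i j. ?K $ i $ j > 0" by (simp add: gibbs_kernel_def)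
  then obtain u where "\<forall>v. total_sum (scaled_kernel ?K u) \<le> total_sum (scaled_kernel ?K v)"
    using total_sum_scaled_kernel_attains_min by blast
  then have "balanced (scaled_kernel ?K u)" by (rule total_sum_scaled_kernel_min_balanced)
  moreover define x0 where "x0 = (\<chi> i. exp (u $ i))"
  ultimately have balancing: "(\<forall>i. x0 $ i > 0) \<and> balanced (?B x0)"
    by (simp add: diag_similarity_scaled_kernel)
  have unique: "is_entropic_mmc_minimizer \<eta> C Q \<longleftrightarrow> Q = ?P x"
    if "(\<forall>i. x $ i > 0) \<and> balanced (?B x)" for x Q
    using that assms by (intro normalized_balancing_unique_entropic_mmc_minimizer) auto
  have "?P x0 = ?P x" if "(\<forall>i. x $ i > 0) \<and> balanced (?B x)" for x
    using unique[OF balancing] unique[OF that] by blast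
  then show ?thesis
    using balancing unique[OF balancing] by blast
qed

end
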